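(* For every formula (type expression) $A$, the judgment $\vdash(\bullet A\to A)\to A$ is derivable in $\mathbf{LA}\mu$. Consequently the rule "from $\Gamma\vdash\bullet A\to A$ infer $\Gamma\vdash A$" is derivable in $\mathbf{LA}\mu$.
   Context: Type expressions: fix a countably infinite set of type variables $X,Y,Z,\dots$. Pseudo type expressions are generated by $A::=X\mid A\to A\mid \bullet A\mid \mu X.A$ ($\mu$ binds $X$; $\alpha$-convertible expressions are identified; $\to$ associates to the right; $\bullet$ binds tighter than $\to$, which binds tighter than $\mu$). $A[B/X]$ denotes capture-avoiding substitution. $\top$ abbreviates $\mu X.\bullet X$. $A$ is proper in $X$ iff: a variable $Y$ is proper in $X$ iff $Y\neq X$; $\bullet A$ is always proper in $X$; $A\to B$ is proper in $X$ iff both $A,B$ are proper in $X$ or $B$ is a $\top$-variant; for $Y\ne X$, $\mu Y.A$ is proper in $X$ iff $A$ is proper in $X$ or $\mu Y.A$ is a $\top$-variant, where $\top$-variants are defined via the tail $t(X)=X$, $t(A\to B)=t(B)$, $t(\bullet A)=\bullet t(A)$, $t(\mu X.A)=\mu X.t(A)$, which has the form $\bullet^{m_0}\mu X_1.\bullet^{m_1}\cdots\mu X_n.\bullet^{m_n}Y$, and $A$ is a $\top$-variant iff $Y=X_i$ for some $i$ with $X_i\notin\{X_{i+1},\dots,X_n\}$ and $m_i+\dots+m_n\ge1$. Type expressions (formulae) are the least set of pseudo type expressions containing all type variables, closed under $\to$ and $\bullet$, and containing $\mu X.A$ whenever it contains $A$ and $A$ is proper in $X$. The formal system $\mathbf{LA}\mu$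 derives judgments $\Gamma\vdash A$ ($\Gamma$ a finite set of formulae, $\bullet\Gamma=\{\bullet B\mid B\in\Gamma\}$) by the rules: (assump) $\Gamma\cup\{A\}\vdash A$; (nec) from $\Gamma_1\vdash A$ infer $\bullet\Gamma_1\cup\Gamma_2\vdash\bullet A$; (4) from $\Gamma\vdash\bullet A$ infer $\Gamma\vdash\bullet\bullet A$; ($\to$I) from $\Gamma\cup\{A\}\vdash B$ infer $\Gamma\vdash A\to B$; ($\to$E) from $\Gamma_1\vdash A\to B$ and $\Gamma_2\vdash A$ infer $\Gamma_1\cup\Gamma_2\vdash B$; (fold) from $\Gamma\vdash A[\mu X.A/X]$ infer $\Gamma\vdash\mu X.A$; (unfold) from $\Gamma\vdash\mu X.A$ infer $\Gamma\vdash A[\mu X.A/X]$; (L) from $\Gamma\vdash\bullet A\to\bullet B$ infer $\Gamma\vdash\bullet(A\to B)$; (approx) from $\Gamma\vdash A$ infer $\Gamma\vdash\bullet A$. $\vdash A$ means $\{\}\vdash A$. *)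

theory Defs
  imports Main
begin

text \<open>Pseudo type expressions in pure de Bruijn representation, so that
alpha-convertible expressions are literally identified.  A variable index
below the binding depth refers to an enclosing mu (0 = innermost); indices
at or above the depth are the (countably many) free type variables.\<close>

datatype ty = Var nat | Arr ty ty | Bul ty | Mu ty

fun lift :: "nat \<Rightarrow> ty \<Rightarrow> ty" where
  "lift k (Var n) = (if n < k then Var n else Var (Suc n))"
| "lift k (Arr A B) = Arr (lift k A) (lift k B)"
| "lift k (Bul A) = Bul (lift k A)"
| "lift k (Mu A) = Mu (lift (Suc k) A)"

fun subst :: "nat \<Rightarrow> ty \<Rightarrow> ty \<Rightarrow> ty" where
  "subst k s (Var n) = (if n < k then Var n else if n = k then s else Var (n - 1))"
| "subst k s (Arr A B) = Arr (subst k s A) (subst k s B)"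
| "subst k s (Bul A) = Bul (subst k s A)"
| "subst k s (Mu A) = Mu (subst (Suc k) (lift 0 s) A)"

text \<open>The unfolding A[mu X.A / X] of mu X.A (body A, X = index 0).\<close>
definition unfold_mu :: "ty \<Rightarrow> ty" where
  "unfold_mu A = subst 0 (Mu A) A"

definition top :: ty where "top = Mu (Bul (Var 0))"

fun tail :: "ty \<Rightarrow> ty" where
  "tail (Var n) = Var n"
| "tail (Arr A B) = tail B"
| "tail (Bul A) = Bul (tail A)"
| "tail (Mu A) = Mu (tail A)"

text \<open>On a tail  bullet^m0 mu X1. bullet^m1 ... mu Xn. bullet^mn Y:
bs ! k counts the bullets between the k-th enclosing binder (innermost first)
and the current position, i.e. m_i + ... + m_n for the binder X_i.  The
variable Y with de Bruijn index k is bound by the innermost binder X_i of its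
name, and the condition is m_i + ... + m_n >= 1.\<close>
fun topv :: "nat list \<Rightarrow> ty \<Rightarrow> bool" where
  "topv bs (Var k) = (k < length bs \<and> bs ! k \<ge> 1)"
| "topv bs (Bul A) = topv (map Suc bs) A"
| "topv bs (Mu A) = topv (0 # bs) A"
| "topv bs (Arr A B) = False"

definition top_variant :: "ty \<Rightarrow> bool" where
  "top_variant A = topv [] (tail A)"

fun proper :: "nat \<Rightarrow> ty \<Rightarrow> bool" where
  "proper X (Var Y) = (Y \<noteq> X)"
| "proper X (Bul A) = True"
| "proper X (Arr A B) = ((proper X A \<and> proper X B) \<or> top_variant B)"
| "proper X (Mu A) = (proper (Suc X) A \<or> top_variant (Mu A))"

inductive formula :: "ty \<Rightarrow> bool" where
  f_var: "formula (Var n)"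
| f_arr: "formula A \<Longrightarrow> formula B \<Longrightarrow> formula (Arr A B)"
| f_bul: "formula A \<Longrightarrow> formula (Bul A)"
| f_mu: "formula A \<Longrightarrow> proper 0 A \<Longrightarrow> formula (Mu A)"

definition ctx :: "ty set \<Rightarrow> bool" where
  "ctx \<Gamma> = (finite \<Gamma> \<and> (\<forall>B\<in>\<Gamma>. formula B))"

inductive LAmu :: "ty set \<Rightarrow> ty \<Rightarrow> bool" where
  assump: "ctx \<Gamma> \<Longrightarrow> formula A \<Longrightarrow> LAmu (\<Gamma> \<union> {A}) A"
| nec: "LAmu \<Gamma>1 A \<Longrightarrow> ctx \<Gamma>2 \<Longrightarrow> LAmu (Bul ` \<Gamma>1 \<union> \<Gamma>2) (Bul A)"
| four: "LAmu \<Gamma> (Bul A) \<Longrightarrow> LAmu \<Gamma> (Bul (Bul A))"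
| impI: "LAmu (\<Gamma> \<union> {A}) B \<Longrightarrow> LAmu \<Gamma> (Arr A B)"
| impE: "LAmu \<Gamma>1 (Arr A B) \<Longrightarrow> LAmu \<Gamma>2 A \<Longrightarrow> LAmu (\<Gamma>1 \<union> \<Gamma>2) B"
| fold: "LAmu \<Gamma> (unfold_mu A) \<Longrightarrow> formula (Mu A) \<Longrightarrow> LAmu \<Gamma> (Mu A)"
| unfold: "LAmu \<Gamma> (Mu A) \<Longrightarrow> LAmu \<Gamma> (unfold_mu A)"
| L: "LAmu \<Gamma> (Arr (Bul A) (Bul B)) \<Longrightarrow> LAmu \<Gamma> (Bul (Arr A B))"
| approx: "LAmu \<Gamma> A \<Longrightarrow> LAmu \<Gamma> (Bul A)"

end

theory Submission
  imports Defs
begin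

text \<open>The fixed point B = \<mu>X.(\<bullet>X \<rightarrow> A), with X fresh for A, unfolds to \<bullet>B \<rightarrow> A.
Applying B to \<bullet>B under a bullet (rules nec and 4) gives \<bullet>B \<turnstile> \<bullet>A; composing with
the hypothesis \<bullet>A \<rightarrow> A yields \<bullet>B \<rightarrow> A, which folds to B. Then approx gives \<bullet>B,
and hence A.\<close>

lemma subst_lift: "subst k s (lift k A) = A"
  by (induction A arbitrary: k s) auto

lemma proper_lift_same: "proper k (lift k A)"
  by (induction A arbitrary: k) auto

lemma tail_lift: "tail (lift k A) = lift k (tail A)"
  by (induction A arbitrary: k) auto

lemma topv_lift: "length bs \<le> k \<Longrightarrow> topv bs (lift k A) = topv bs A"
  by (induction A arbitrary: k bs) auto

lemma top_variant_lift: "top_variant (lift k A) = top_variant A"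
  unfolding top_variant_def by (simp add: tail_lift topv_lift)

lemma proper_lift:
  "proper X A \<Longrightarrow> proper (if X < k then X else Suc X) (lift k A)"
proof (induction A arbitrary: X k)
  case (Arr A B)
  then consider "proper X A \<and> proper X B" | "top_variant B" by auto
  then show ?case
  proof cases
    case 1
    with Arr.IH[of X k] show ?thesis by simp
  next
    case 2
    then show ?thesis by (simp add: top_variant_lift)
  qed
next
  case (Mu A)
  then consider "proper (Suc X) A" | "top_variant (Mu A)" by auto
  then show ?case
  proof cases
    case 1
    from Mu.IH[OF this, of "Suc k"] show ?thesis by (auto split: if_splits)
  next
    case 2
    then have "top_variant (lift k (Mu A))" by (simp only: top_variant_lift)
    then show ?thesis by simp
  qed
qed auto

lemma formula_lift: "formula A \<Longrightarrow> formula (lift k A)"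
proof (induction A arbitrary: k rule: formula.induct)
  case (f_mu A)
  have "proper 0 (lift (Suc k) A)"
    using proper_lift[OF f_mu.hyps(2), of "Suc k"] by simp
  with f_mu show ?case by (auto intro: formula.intros)
qed (auto intro: formula.intros)

lemma LAmu_assump_singleton: "formula A \<Longrightarrow> LAmu {A} A"
  using assump[of "{}" A] by (simp add: ctx_def)

definition loeb_fix :: "ty \<Rightarrow> ty" where
  "loeb_fix A = Mu (Arr (Bul (Var 0)) (lift 0 A))"

lemma formula_loeb_fix:
  assumes "formula A"
  shows "formula (loeb_fix A)"
  unfolding loeb_fix_def
  using assms proper_lift_same[of 0 A]
  by (auto intro!: formula.intros formula_lift)

lemma unfold_loeb_fix:
  "unfold_mu (Arr (Bul (Var 0)) (lift 0 A)) = Arr (Bul (loeb_fix A)) A"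
  by (simp add: unfold_mu_def loeb_fix_def subst_lift)

lemma LAmu_fold_loeb_fix:
  "LAmu \<Gamma> (Arr (Bul (loeb_fix A)) A) \<Longrightarrow> formula A \<Longrightarrow> LAmu \<Gamma> (loeb_fix A)"
  using fold[of \<Gamma> "Arr (Bul (Var 0)) (lift 0 A)"] formula_loeb_fix[of A]
  by (simp add: unfold_loeb_fix loeb_fix_def)

lemma LAmu_unfold_loeb_fix:
  "formula A \<Longrightarrow> LAmu {loeb_fix A} (Arr (Bul (loeb_fix A)) A)"
  using unfold[of "{loeb_fix A}" "Arr (Bul (Var 0)) (lift 0 A)"]
    LAmu_assump_singleton[OF formula_loeb_fix, of A]
  by (simp add: unfold_loeb_fix loeb_fix_def)

lemma LAmu_later_loeb_fix_later:
  assumes "formula A"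
  shows "LAmu {Bul (loeb_fix A)} (Bul A)"
proof -
  let ?B = "loeb_fix A"
  have later_B: "LAmu {Bul ?B} (Bul ?B)"
    using assms by (intro LAmu_assump_singleton formula.intros formula_loeb_fix)
  have "LAmu {?B, Bul ?B} A"
    using impE[OF LAmu_unfold_loeb_fix[OF assms] later_B] by (simp add: insert_commute)
  then have "LAmu {Bul ?B, Bul (Bul ?B)} (Bul A)"
    using nec[of "{?B, Bul ?B}" A "{}"] by (simp add: ctx_def)
  then have "LAmu {Bul ?B} (Arr (Bul (Bul ?B)) (Bul A))"
    using impI[of "{Bul ?B}"] by (simp add: insert_commute)
  from impE[OF this four[OF later_B]] show ?thesis by simp
qed

lemma LAmu_loeb_fix_from_hyp:
  assumes "formula A"
  shows "LAmu {Arr (Bul A) A} (Arr (Bul (loeb_fix A)) A)"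
proof -
  have "LAmu {Arr (Bul A) A} (Arr (Bul A) A)"
    using assms by (intro LAmu_assump_singleton formula.intros)
  from impE[OF this LAmu_later_loeb_fix_later[OF assms]]
  have "LAmu ({Arr (Bul A) A} \<union> {Bul (loeb_fix A)}) A" .
  then show ?thesis by (rule impI)
qed

theorem proposition10:
  assumes "formula A"
  shows "LAmu {} (Arr (Arr (Bul A) A) A)
    \<and> (\<forall>\<Gamma>. LAmu \<Gamma> (Arr (Bul A) A) \<longrightarrow> LAmu \<Gamma> A)"
proof -
  have to_B: "LAmu {Arr (Bul A) A} (Arr (Bul (loeb_fix A)) A)"
    using LAmu_loeb_fix_from_hyp[OF assms] .
  have "LAmu {Arr (Bul A) A} (Bul (loeb_fix A))"
    using approx[OF LAmu_fold_loeb_fix[OF to_B assms]] .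
  from impE[OF to_B this] have "LAmu ({} \<union> {Arr (Bul A) A}) A" by simp
  then have loeb: "LAmu {} (Arr (Arr (Bul A) A) A)" by (rule impI)
  moreover have "LAmu \<Gamma> A" if "LAmu \<Gamma> (Arr (Bul A) A)" for \<Gamma>
    using impE[OF loeb that] by simp
  ultimately show ?thesis by blast
qed

end
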